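(* Let $\mathcal{C}=(\mu_\alpha)_{\alpha\in A}$ be a continuous admissible family of valuations of $K[x]$ and let $\phi$ be a limit key polynomial for $\mathcal{C}$. Let $f\in K[x]$ and let $f=q\phi+r$ be the Euclidean division of $f$ by $\phi$. If $f$ is not $A$-divisible by $\phi$, then $\mu_A(r)=\mu_A(f)<\mu_\alpha(q\phi)$ for all sufficiently large $\alpha\in A$.
   Context: $K$ is a field with valuation $\nu$, and all valuations of $K[x]$ extend $\nu$ with values in a fixed totally ordered group $\tilde\Gamma$. For a valuation $\mu$ of $K[x]$: $f\sim_\mu g$ if $\mu(f-g)>\mu(f)$, and $\phi$ $\mu$-divides $g$ if $g\sim_\mu\phi h$ for some $h\in K[x]$. A key polynomial for $\mu$ is a monic polynomial that is $\mu$-irreducible and $\mu$-minimal (MacLane); for a key polynomial $\phi$ and $\gamma>\mu(\phi)$ the augmented valuation $[\mu;\mu'(\phi)=\gamma]$ is $\mu'(\sum_j g_j\phi^j)=\inf_j(\mu(g_j)+j\gamma)$ for the $\phi$-adic expansion with $\deg g_j<\deg\phi$. A continuous admissible family $\mathcal{C}=(\mu_\alpha)_{\alpha\in A}$: $A$ is a totally ordered set without maximum, there is a valuation $\mu$ of $K[x]$, monic polynomials $\phi_\alpha$ all of the same degree and values $\gamma_\alpha\in\tilde\Gamma$ strictly increasing without maximum, with $\mu_\alpha=[\mu;\mu_\alpha(\phi_\alpha)=\gamma_\alpha]$, and for $\alpha<\beta$, $\phi_\beta$ is a key polynomial for $\mu_\alpha$ and $\mu_\beta=[\mu_\alpha;\mu_\beta(\phi_\beta)=\gamma_\beta]$,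 $\gamma_\beta>\mu_\alpha(\phi_\beta)=\gamma_\alpha$. $\tilde\Phi(\mathcal{C})=\{f\in K[x]:\mu_\alpha(f)<\mu_\beta(f)\text{ for all }\alpha<\beta\text{ in }A\}$. A limit key polynomial for $\mathcal{C}$ is a monic polynomial of minimal degree in $\tilde\Phi(\mathcal{C})$ (assumed nonempty). A polynomial $f$ $A$-divides $g$ if there is $\alpha\in A$ such that $f$ $\mu_\beta$-divides $g$ for all $\beta\ge\alpha$. For a limit key polynomial $\phi$, a polynomial belongs to $\tilde\Phi(\mathcal{C})$ if and only if it is $A$-divisible by $\phi$. For $f\notin\tilde\Phi(\mathcal{C})$, $\mu_A(f)=\sup_{\alpha\in A}\mu_\alpha(f)$, which equals $\mu_\alpha(f)$ for all sufficiently large $\alpha$. *)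

theory Defs
  imports "HOL-Computational_Algebra.Polynomial" "HOL-Library.Extended"
begin

text \<open>Values live in \<open>\<Gamma>\<infinity> = \<Gamma> \<union> {\<infinity>}\<close>, realised as \<open>'g extended\<close>
  (constructor \<open>Fin\<close> for elements of the totally ordered group \<open>'g\<close>, \<open>Pinf\<close> for \<infinity>);
  the value \<open>Minf\<close> is excluded by the definitions below.\<close>

definition field_valuation :: "('k::field \<Rightarrow> 'g::linordered_ab_group_add extended) \<Rightarrow> bool" where
  "field_valuation \<nu> \<longleftrightarrow>
     (\<forall>a. \<nu> a \<noteq> Minf) \<and> (\<forall>a. \<nu> a = Pinf \<longleftrightarrow> a = 0) \<and>
     (\<forall>a b. \<nu> (a * b) = \<nu> a + \<nu> b) \<and> (\<forall>a b. min (\<nu> a) (\<nu> b) \<le> \<nu> (a + b))"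

text \<open>A valuation of \<open>K[x]\<close> extending \<open>\<nu>\<close> (its support \<open>\<mu>\<^sup>-\<^sup>1(\<infinity>)\<close> may be a nonzero prime).\<close>
definition poly_valuation ::
  "('k::field \<Rightarrow> 'g::linordered_ab_group_add extended) \<Rightarrow> ('k poly \<Rightarrow> 'g extended) \<Rightarrow> bool" where
  "poly_valuation \<nu> \<mu> \<longleftrightarrow>
     (\<forall>f. \<mu> f \<noteq> Minf) \<and> \<mu> 0 = Pinf \<and> \<mu> 1 = 0 \<and>
     (\<forall>f g. \<mu> (f * g) = \<mu> f + \<mu> g) \<and> (\<forall>f g. min (\<mu> f) (\<mu> g) \<le> \<mu> (f + g)) \<and>
     (\<forall>c. \<mu> [:c:] = \<nu> c)"

definition mu_equiv :: "('k::field poly \<Rightarrow> 'g::linordered_ab_group_add extended) \<Rightarrow> 'k poly \<Rightarrow> 'k poly \<Rightarrow> bool" where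
  "mu_equiv \<mu> f g \<longleftrightarrow> \<mu> (f - g) > \<mu> f"

definition mu_divides :: "('k::field poly \<Rightarrow> 'g::linordered_ab_group_add extended) \<Rightarrow> 'k poly \<Rightarrow> 'k poly \<Rightarrow> bool" where
  "mu_divides \<mu> \<phi> g \<longleftrightarrow> (\<exists>h. mu_equiv \<mu> g (\<phi> * h))"

text \<open>\<open>\<mu>\<close>-irreducible: the initial form of \<open>\<phi>\<close> generates a nonzero proper prime ideal
  of the graded algebra, i.e. \<open>\<mu> \<phi> < \<infinity>\<close>, \<open>\<phi>\<close> does not \<open>\<mu>\<close>-divide 1, and
  \<open>\<phi> |\<^sub>\<mu> g h\<close> implies \<open>\<phi> |\<^sub>\<mu> g\<close> or \<open>\<phi> |\<^sub>\<mu> h\<close>.\<close>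
definition mu_irreducible :: "('k::field poly \<Rightarrow> 'g::linordered_ab_group_add extended) \<Rightarrow> 'k poly \<Rightarrow> bool" where
  "mu_irreducible \<mu> \<phi> \<longleftrightarrow>
     \<mu> \<phi> \<noteq> Pinf \<and> \<not> mu_divides \<mu> \<phi> 1 \<and>
     (\<forall>g h. mu_divides \<mu> \<phi> (g * h) \<longrightarrow> mu_divides \<mu> \<phi> g \<or> mu_divides \<mu> \<phi> h)"

definition mu_minimal :: "('k::field poly \<Rightarrow> 'g::linordered_ab_group_add extended) \<Rightarrow> 'k poly \<Rightarrow> bool" where
  "mu_minimal \<mu> \<phi> \<longleftrightarrow> (\<forall>f. f \<noteq> 0 \<longrightarrow> mu_divides \<mu> \<phi> f \<longrightarrow> degree f \<ge> degree \<phi>)"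

definition key_polynomial :: "('k::field poly \<Rightarrow> 'g::linordered_ab_group_add extended) \<Rightarrow> 'k poly \<Rightarrow> bool" where
  "key_polynomial \<mu> \<phi> \<longleftrightarrow> lead_coeff \<phi> = 1 \<and> mu_irreducible \<mu> \<phi> \<and> mu_minimal \<mu> \<phi>"

text \<open>The \<open>j\<close>-th coefficient of the \<open>\<phi>\<close>-adic expansion \<open>f = \<Sum>\<^sub>j f\<^sub>j \<phi>\<^sup>j\<close>, \<open>deg f\<^sub>j < deg \<phi>\<close>.\<close>
definition adic_coeff :: "'k::field poly \<Rightarrow> 'k poly \<Rightarrow> nat \<Rightarrow> 'k poly" where
  "adic_coeff \<phi> f j = (f div \<phi> ^ j) mod \<phi>"

text \<open>Augmented valuation \<open>[\<mu>; \<mu>'(\<phi>) = \<gamma>]\<close>: \<open>\<mu>'(\<Sum>\<^sub>j f\<^sub>j \<phi>\<^sup>j) = min\<^sub>j (\<mu>(f\<^sub>j) + j\<gamma>)\<close>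
  (all nonzero terms of the expansion have index \<open>j \<le> deg f\<close>).\<close>
definition augment ::
  "('k::field poly \<Rightarrow> 'g::linordered_ab_group_add extended) \<Rightarrow> 'k poly \<Rightarrow> 'g \<Rightarrow> ('k poly \<Rightarrow> 'g extended)" where
  "augment \<mu> \<phi> \<gamma> = (\<lambda>f. Min ((\<lambda>j. \<mu> (adic_coeff \<phi> f j) + Fin (\<Sum>i<j. \<gamma>)) ` {0..degree f}))"

text \<open>Continuous admissible family indexed by the totally ordered type \<open>'a\<close> (no maximum):
  \<open>\<mu>\<^sub>\<alpha> = augment \<mu> (\<phi>s \<alpha>) (\<gamma>s \<alpha>)\<close>.\<close>
definition continuous_family ::
  "('k::field \<Rightarrow> 'g::linordered_ab_group_add extended) \<Rightarrow> ('k poly \<Rightarrow> 'g extended)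
   \<Rightarrow> ('a::linorder \<Rightarrow> 'k poly) \<Rightarrow> ('a \<Rightarrow> 'g) \<Rightarrow> bool" where
  "continuous_family \<nu> \<mu> \<phi>s \<gamma>s \<longleftrightarrow>
     (\<forall>\<alpha>::'a. \<exists>\<beta>. \<alpha> < \<beta>) \<and>
     poly_valuation \<nu> \<mu> \<and>
     (\<forall>\<alpha>. key_polynomial \<mu> (\<phi>s \<alpha>) \<and> \<mu> (\<phi>s \<alpha>) < Fin (\<gamma>s \<alpha>)) \<and>
     (\<forall>\<alpha> \<beta>. degree (\<phi>s \<alpha>) = degree (\<phi>s \<beta>)) \<and>
     strict_mono \<gamma>s \<and> (\<forall>\<alpha>. \<exists>\<beta>. \<gamma>s \<alpha> < \<gamma>s \<beta>) \<and>
     (\<forall>\<alpha> \<beta>. \<alpha> < \<beta> \<longrightarrow>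
        key_polynomial (augment \<mu> (\<phi>s \<alpha>) (\<gamma>s \<alpha>)) (\<phi>s \<beta>) \<and>
        augment \<mu> (\<phi>s \<alpha>) (\<gamma>s \<alpha>) (\<phi>s \<beta>) = Fin (\<gamma>s \<alpha>) \<and>
        augment \<mu> (\<phi>s \<beta>) (\<gamma>s \<beta>) =
          augment (augment \<mu> (\<phi>s \<alpha>) (\<gamma>s \<alpha>)) (\<phi>s \<beta>) (\<gamma>s \<beta>))"

definition PhiC :: "('a::linorder \<Rightarrow> 'k::field poly \<Rightarrow> 'g::linordered_ab_group_add extended) \<Rightarrow> 'k poly set" where
  "PhiC \<mu>s = {f. \<forall>\<alpha> \<beta>. \<alpha> < \<beta> \<longrightarrow> \<mu>s \<alpha> f < \<mu>s \<beta> f}"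

definition limit_key_polynomial ::
  "('a::linorder \<Rightarrow> 'k::field poly \<Rightarrow> 'g::linordered_ab_group_add extended) \<Rightarrow> 'k poly \<Rightarrow> bool" where
  "limit_key_polynomial \<mu>s \<phi> \<longleftrightarrow>
     lead_coeff \<phi> = 1 \<and> \<phi> \<in> PhiC \<mu>s \<and> (\<forall>g. lead_coeff g = 1 \<and> g \<in> PhiC \<mu>s \<longrightarrow> degree \<phi> \<le> degree g)"

definition A_divides ::
  "('a::linorder \<Rightarrow> 'k::field poly \<Rightarrow> 'g::linordered_ab_group_add extended) \<Rightarrow> 'k poly \<Rightarrow> 'k poly \<Rightarrow> bool" where
  "A_divides \<mu>s f g \<longleftrightarrow> (\<exists>\<alpha>. \<forall>\<beta>. \<alpha> \<le> \<beta> \<longrightarrow> mu_divides (\<mu>s \<beta>) f g)"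

definition mu_A :: "('a::linorder \<Rightarrow> 'k::field poly \<Rightarrow> 'g::linordered_ab_group_add extended) \<Rightarrow> 'k poly \<Rightarrow> 'g extended" where
  "mu_A \<mu>s f = (THE s. (\<forall>\<alpha>. \<mu>s \<alpha> f \<le> s) \<and> (\<forall>u. (\<forall>\<alpha>. \<mu>s \<alpha> f \<le> u) \<longrightarrow> s \<le> u))"

end

theory Submission
  imports Defs
begin

text \<open>
  Every \<open>\<mu>\<^sub>\<alpha>\<close> is a valuation with trivial support (MacLane's augmentation theorem, proved from
  the recursion \<open>\<mu>'(f) = min (\<mu>(f mod \<psi>)) (\<gamma> + \<mu>'(f div \<psi>))\<close>), and the family is increasing.
  A polynomial outside \<open>\<Phi>(\<C>)\<close> has eventually constant value: once \<open>\<mu>\<^sub>\<alpha>(g) = \<mu>\<^sub>\<beta>(g)\<close> for some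
  \<open>\<alpha> < \<beta>\<close>, \<open>g\<close> is not \<open>\<mu>\<^sub>\<alpha>\<close>-divisible by \<open>\<phi>\<^sub>\<beta>\<close>, hence by no \<open>\<phi>\<^sub>\<delta>\<close> with \<open>\<delta> > \<beta>\<close>, because all
  these key polynomials are \<open>\<mu>\<^sub>\<alpha>\<close>-equivalent; so \<open>\<mu>\<^sub>\<delta>(g) = \<mu>\<^sub>\<alpha>(g)\<close>.

  The remainder \<open>r = f mod \<phi>\<close> is nonzero and has degree below that of the limit key polynomial,
  so \<open>r \<notin> \<Phi>(\<C>)\<close> and \<open>\<mu>\<^sub>\<alpha>(r) = \<mu>\<^sub>A(r)\<close> eventually. If \<open>\<mu>\<^sub>\<alpha>(q\<phi>)\<close> never exceeded \<open>\<mu>\<^sub>A(r)\<close>, the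
  strict growth of \<open>\<mu>\<^sub>\<alpha>(q\<phi>)\<close> (as \<open>\<phi> \<in> \<Phi>(\<C>)\<close>) would give \<open>\<mu>\<^sub>\<beta>(q\<phi>) < \<mu>\<^sub>\<beta>(r)\<close> for all large \<open>\<beta>\<close>,
  i.e. \<open>f \<sim> q\<phi>\<close>, and \<open>f\<close> would be \<open>A\<close>-divisible by \<open>\<phi>\<close>. Hence \<open>\<mu>\<^sub>A(r) < \<mu>\<^sub>\<alpha>(q\<phi>)\<close> eventually,
  and then \<open>\<mu>\<^sub>\<alpha>(f) = \<mu>\<^sub>\<alpha>(r)\<close>.
\<close>

lemma extended_add_Pinf [simp]:
  "a \<noteq> Minf \<Longrightarrow> Pinf + a = Pinf" "a \<noteq> Minf \<Longrightarrow> a + Pinf = Pinf"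
  by (cases a; simp)+

lemma Fin_add_less_iff [simp]:
  fixes a b :: "'g::linordered_ab_group_add extended"
  shows "Fin c + a < Fin c + b \<longleftrightarrow> a < b" "a + Fin c < b + Fin c \<longleftrightarrow> a < b"
  by (cases a; cases b; simp)+

lemma extended_add_min_distrib:
  fixes a b c :: "'g::linordered_ab_group_add extended"
  shows "c + min a b = min (c + a) (c + b)" "min a b + c = min (a + c) (b + c)"
  by (cases "a \<le> b"; auto simp: min_def add_left_mono add_right_mono intro: antisym)+

lemma ultrametric_add_eq_left:
  fixes w :: "'a::ab_group_add \<Rightarrow> 'b::linorder"
  assumes ultra: "\<And>f g. min (w f) (w g) \<le> w (f + g)" and uminus: "\<And>f. w (- f) = w f"
    and less: "w a < w b"
  shows "w (a + b) = w a"
proof -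
  have "w a \<le> w (a + b)"
    using ultra[of a b] less by (simp add: min_def split: if_splits)
  moreover have "min (w (a + b)) (w b) \<le> w a"
    using ultra[of "a + b" "- b"] uminus[of b] by simp
  ultimately show ?thesis
    using less by (auto simp: min_def split: if_splits)
qed

section \<open>Valuations of \<open>K[x]\<close> with trivial support\<close>

definition valuation :: "('k::field poly \<Rightarrow> 'g::linordered_ab_group_add extended) \<Rightarrow> bool" where
  "valuation v \<longleftrightarrow> (\<forall>f. v f \<noteq> Minf) \<and> (\<forall>f. v f = Pinf \<longleftrightarrow> f = 0) \<and>
     (\<forall>f g. v (f * g) = v f + v g) \<and> (\<forall>f g. min (v f) (v g) \<le> v (f + g))"

context
  fixes v :: "'k::field poly \<Rightarrow> 'g::linordered_ab_group_add extended"
  assumes v: "valuation v"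
begin

lemma valuation_neq_Minf: "v f \<noteq> Minf"
  using v by (simp add: valuation_def)

lemma valuation_eq_Pinf_iff: "v f = Pinf \<longleftrightarrow> f = 0"
  using v by (simp add: valuation_def)

lemma valuation_0 [simp]: "v 0 = Pinf"
  by (simp add: valuation_eq_Pinf_iff)

lemma valuation_mult: "v (f * g) = v f + v g"
  using v by (simp add: valuation_def)

lemma valuation_add: "min (v f) (v g) \<le> v (f + g)"
  using v by (simp add: valuation_def)

lemma valuation_FinE:
  assumes "f \<noteq> 0"
  obtains x where "v f = Fin x"
  using assms valuation_neq_Minf valuation_eq_Pinf_iff by (cases "v f") auto

lemma valuation_less_Pinf: "f \<noteq> 0 \<Longrightarrow> v f < Pinf"
  by (metis valuation_FinE less_extended_simps(2))

lemma valuation_1 [simp]: "v 1 = 0"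
proof -
  obtain y where y: "v 1 = Fin y"
    using valuation_FinE[of 1] by auto
  have "v 1 = v 1 + v 1"
    using valuation_mult[of 1 1] by simp
  with y show ?thesis
    by (simp add: zero_extended_def)
qed

lemma valuation_unit_eq_0:
  assumes "u * u = 1"
  shows "v u = 0"
proof -
  have "u \<noteq> 0"
    using assms by (metis mult_zero_left zero_neq_one)
  then obtain x where x: "v u = Fin x"
    by (rule valuation_FinE)
  have "x + x = 0"
    using valuation_mult[of u u] assms x by (simp add: zero_extended_def)
  then have "x = 0"
    by (metis add_neg_neg add_pos_pos less_irrefl linorder_neqE)
  with x show ?thesis
    by (simp add: zero_extended_def)
qed

lemma valuation_uminus [simp]: "v (- f) = v f"
proof -
  have "v (-1) = 0"
    by (rule valuation_unit_eq_0) simp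
  then show ?thesis
    using valuation_mult[of "-1" f] by simp
qed

lemma valuation_add_eq_left: "v a < v b \<Longrightarrow> v (a + b) = v a"
  by (rule ultrametric_add_eq_left) (auto simp: valuation_add)

lemma valuation_eq_if_mu_equiv: "mu_equiv v g h \<Longrightarrow> v h = v g"
  using valuation_add_eq_left[of g "h - g"] valuation_uminus[of "g - h"]
  by (simp add: mu_equiv_def)

lemma mu_divides_if_dvd:
  assumes "\<phi> dvd f" "f \<noteq> 0"
  shows "mu_divides v \<phi> f"
proof -
  obtain h where "f = \<phi> * h"
    using assms(1) by blast
  then have "mu_equiv v f (\<phi> * h)"
    using assms(2) by (simp add: mu_equiv_def valuation_less_Pinf)
  then show ?thesis
    unfolding mu_divides_def by blast
qed

lemma mu_divides_add_if_less:
  assumes "v (\<phi> * q) < v r"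
  shows "mu_divides v \<phi> (\<phi> * q + r)"
proof -
  have "v (\<phi> * q + r) = v (\<phi> * q)"
    using assms by (rule valuation_add_eq_left)
  then have "mu_equiv v (\<phi> * q + r) (\<phi> * q)"
    using assms by (simp add: mu_equiv_def)
  then show ?thesis
    unfolding mu_divides_def by blast
qed

end

lemma poly_bezout:
  fixes p q :: "'k::field poly"
  shows "\<exists>a b. a * p + b * q dvd p \<and> a * p + b * q dvd q"
proof (induction "if q = 0 then 0 else Suc (degree q)" arbitrary: p q rule: less_induct)
  case less
  show ?case
  proof (cases "q = 0")
    case True
    then show ?thesis
      by (intro exI[of _ 1] exI[of _ 0]) simp
  next
    case False
    have "(if p mod q = 0 then 0 else Suc (degree (p mod q))) < Suc (degree q)"
      using False degree_mod_less'[of q p] by auto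
    then obtain a b where ab: "a * q + b * (p mod q) dvd q" "a * q + b * (p mod q) dvd p mod q"
      using less.hyps[of "p mod q" q] False by auto
    have "a * q + b * (p mod q) dvd (p div q) * q + p mod q"
      using ab by (intro dvd_add dvd_mult)
    then have "a * q + b * (p mod q) dvd p"
      by simp
    moreover have "b * p + (a - b * (p div q)) * q = a * q + b * (p mod q)"
      by (simp add: minus_div_mult_eq_mod[symmetric] algebra_simps)
    ultimately show ?thesis
      using ab(1) by (intro exI[of _ b] exI[of _ "a - b * (p div q)"]) simp
  qed
qed

lemma valuation_if_key_polynomial:
  assumes pv: "poly_valuation \<nu> \<mu>" and key: "key_polynomial \<mu> \<psi>"
  shows "valuation \<mu>"
proof -
  have neq_Minf: "\<mu> f \<noteq> Minf" and mult: "\<mu> (f * g) = \<mu> f + \<mu> g"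
    and add: "min (\<mu> f) (\<mu> g) \<le> \<mu> (f + g)" for f g
    using pv by (simp_all add: poly_valuation_def)
  have \<mu>0: "\<mu> 0 = Pinf" and \<mu>1: "\<mu> 1 = 0"
    using pv by (simp_all add: poly_valuation_def)
  have \<psi>_finite: "\<mu> \<psi> \<noteq> Pinf" and not_divides_1: "\<not> mu_divides \<mu> \<psi> 1"
    using key by (simp_all add: key_polynomial_def mu_irreducible_def)
  \<comment> \<open>If \<open>\<mu> g = \<infinity>\<close>, a common divisor \<open>d = a\<psi> + bg\<close> of \<open>\<psi>\<close> and \<open>g\<close> is either a unit, and then
    \<open>1 \<sim>\<^sub>\<mu> \<psi>ac\<close>, or of positive degree, and then \<open>g/d\<close> is a smaller polynomial of value \<open>\<infinity>\<close>.\<close>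
  have "\<mu> g \<noteq> Pinf" if "g \<noteq> 0" for g
    using that
  proof (induction "degree g" arbitrary: g rule: less_induct)
    case less
    show ?case
    proof
      assume g_Pinf: "\<mu> g = Pinf"
      obtain a b where dvd: "a * \<psi> + b * g dvd \<psi>" "a * \<psi> + b * g dvd g"
        using poly_bezout by blast
      define d where "d = a * \<psi> + b * g"
      obtain e where e: "g = d * e"
        using dvd(2) unfolding d_def by blast
      obtain u where u: "\<psi> = d * u"
        using dvd(1) unfolding d_def by blast
      have "\<mu> d \<noteq> Pinf"
        using \<psi>_finite u mult[of d u] neq_Minf[of u] by (cases "\<mu> d") auto
      then have e_Pinf: "\<mu> e = Pinf"
        using g_Pinf e mult[of d e] neq_Minf[of d] neq_Minf[of e]
        by (cases "\<mu> d"; cases "\<mu> e") auto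
      have "d \<noteq> 0" "e \<noteq> 0"
        using e less.prems by auto
      show False
      proof (cases "degree d = 0")
        case True
        then have "is_unit d"
          using \<open>d \<noteq> 0\<close> is_unit_iff_degree by blast
        then obtain c where "1 = d * c"
          by (rule dvdE)
        then have "1 - \<psi> * (a * c) = (b * c) * g"
          by (simp add: d_def algebra_simps)
        moreover have "\<mu> ((b * c) * g) = Pinf"
          using mult[of "b * c" g] g_Pinf neq_Minf[of "b * c"] by simp
        ultimately have "mu_equiv \<mu> 1 (\<psi> * (a * c))"
          using \<mu>1 by (simp add: mu_equiv_def zero_extended_def)
        then show False
          using not_divides_1 unfolding mu_divides_def by blast
      next
        case False
        then have "degree e < degree g"
          using e degree_mult_eq[OF \<open>d \<noteq> 0\<close> \<open>e \<noteq> 0\<close>] by simp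
        then show False
          using less.hyps \<open>e \<noteq> 0\<close> e_Pinf by blast
      qed
    qed
  qed
  then have "\<mu> f = Pinf \<longleftrightarrow> f = 0" for f
    using \<mu>0 by blast
  then show ?thesis
    unfolding valuation_def using neq_Minf mult add by blast
qed

section \<open>Augmented valuations\<close>

definition adic_term ::
  "('k::field poly \<Rightarrow> 'g::linordered_ab_group_add extended) \<Rightarrow> 'k poly \<Rightarrow> 'g \<Rightarrow> 'k poly \<Rightarrow> nat \<Rightarrow> 'g extended" where
  "adic_term v \<psi> \<gamma> f j = v (adic_coeff \<psi> f j) + Fin (\<Sum>i<j. \<gamma>)"

lemma adic_term_0: "adic_term v \<psi> \<gamma> f 0 = v (f mod \<psi>)"
  by (simp add: adic_term_def adic_coeff_def flip: zero_extended_def)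

lemma adic_term_Suc: "adic_term v \<psi> \<gamma> f (Suc j) = Fin \<gamma> + adic_term v \<psi> \<gamma> (f div \<psi>) j"
proof -
  have "adic_coeff \<psi> f (Suc j) = adic_coeff \<psi> (f div \<psi>) j"
    by (simp add: adic_coeff_def poly_div_mult_right)
  moreover have "Fin (\<Sum>i<Suc j. \<gamma>) = Fin \<gamma> + Fin (\<Sum>i<j. \<gamma>)"
    by simp
  ultimately show ?thesis
    unfolding adic_term_def by (simp only: ac_simps)
qed

lemma adic_term_beyond_degree:
  assumes "valuation v" "degree \<psi> > 0" "degree f < j"
  shows "adic_term v \<psi> \<gamma> f j = Pinf"
proof -
  have "j \<le> j * degree \<psi>"
    using assms(2) by simp
  then have "degree f < j * degree \<psi>"
    using assms(3) by linarith
  also have "j * degree \<psi> = degree (\<psi> ^ j)"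
    using assms(2) by (metis degree_0 degree_power_eq less_irrefl mult.commute)
  finally have "f div \<psi> ^ j = 0"
    by (rule div_poly_less)
  then show ?thesis
    using assms(1) by (simp add: adic_term_def adic_coeff_def)
qed

lemma augment_eq_Min_adic_term:
  assumes "valuation v" "degree \<psi> > 0" "degree f \<le> N"
  shows "augment v \<psi> \<gamma> f = Min (adic_term v \<psi> \<gamma> f ` {0..N})"
proof -
  have "Min (adic_term v \<psi> \<gamma> f ` {0..degree f + k}) = Min (adic_term v \<psi> \<gamma> f ` {0..degree f})" for k
  proof (induction k)
    case (Suc k)
    have "{0..degree f + Suc k} = insert (Suc (degree f + k)) {0..degree f + k}"
      by auto
    then show ?case
      using Suc adic_term_beyond_degree[OF assms(1,2)] by (simp add: Min_insert)
  qed simp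
  from this[of "N - degree f"] assms(3) show ?thesis
    by (simp add: augment_def adic_term_def)
qed

lemma augment_rec:
  assumes v: "valuation v" and \<psi>: "degree \<psi> > 0"
  shows "augment v \<psi> \<gamma> f = min (v (f mod \<psi>)) (Fin \<gamma> + augment v \<psi> \<gamma> (f div \<psi>))"
proof -
  let ?T = "adic_term v \<psi> \<gamma>"
  let ?N = "degree f"
  have "degree (f div \<psi>) \<le> ?N"
    using \<psi> degree_div_less[of f \<psi>] div_poly_less[of f \<psi>] by (cases "?N = 0") auto
  then have "Fin \<gamma> + augment v \<psi> \<gamma> (f div \<psi>) = Fin \<gamma> + Min (?T (f div \<psi>) ` {0..?N})"
    by (simp add: augment_eq_Min_adic_term[OF v \<psi>])
  also have "\<dots> = Min ((\<lambda>x. Fin \<gamma> + x) ` ?T (f div \<psi>) ` {0..?N})"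
    by (rule mono_Min_commute) (auto simp: mono_def add_left_mono)
  also have "\<dots> = Min ((\<lambda>j. ?T f (Suc j)) ` {0..?N})"
    by (simp add: image_image adic_term_Suc)
  finally have "min (v (f mod \<psi>)) (Fin \<gamma> + augment v \<psi> \<gamma> (f div \<psi>))
      = Min (insert (?T f 0) ((\<lambda>j. ?T f (Suc j)) ` {0..?N}))"
    by (simp add: Min_insert adic_term_0)
  also have "insert (?T f 0) ((\<lambda>j. ?T f (Suc j)) ` {0..?N}) = ?T f ` {0..Suc ?N}"
    by (simp only: atLeast0_atMost_Suc_eq_insert_0 image_insert image_image)
  finally show ?thesis
    by (simp add: augment_eq_Min_adic_term[OF v \<psi>])
qed

lemma poly_induct_div:
  fixes \<psi> :: "'k::field poly"
  assumes "degree \<psi> > 0" and "P 0" and "\<And>g. g \<noteq> 0 \<Longrightarrow> P (g div \<psi>) \<Longrightarrow> P g"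
  shows "P g"
proof (induction "degree g" arbitrary: g rule: less_induct)
  case less
  show ?case
  proof (cases "g = 0")
    case False
    have "P (g div \<psi>)"
    proof (cases "degree g = 0")
      case True
      then show ?thesis
        using assms(1,2) by (simp add: div_poly_less)
    next
      case False
      then have "degree (g div \<psi>) < degree g"
        using assms(1) by (simp add: degree_div_less)
      then show ?thesis
        by (rule less)
    qed
    with False show ?thesis
      by (rule assms(3))
  qed (use assms(2) in simp)
qed

context
  fixes v :: "'k::field poly \<Rightarrow> 'g::linordered_ab_group_add extended" and \<psi> :: "'k poly" and \<gamma> :: 'g
  assumes v: "valuation v" and \<psi>: "degree \<psi> > 0"
begin

lemma augment_mod_add_mult:
  assumes "degree a < degree \<psi>"
  shows "augment v \<psi> \<gamma> (a + \<psi> * h) = min (v a) (Fin \<gamma> + augment v \<psi> \<gamma> h)"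
proof -
  have "\<psi> \<noteq> 0"
    using \<psi> by auto
  then show ?thesis
    using augment_rec[OF v \<psi>, of \<gamma> "a + \<psi> * h"] assms by (simp add: mod_poly_less div_poly_less)
qed

lemma augment_of_degree_less: "degree a < degree \<psi> \<Longrightarrow> augment v \<psi> \<gamma> a = v a"
  using augment_mod_add_mult[of a 0] v by (simp add: augment_def adic_coeff_def)

lemma augment_key_mult: "augment v \<psi> \<gamma> (\<psi> * h) = Fin \<gamma> + augment v \<psi> \<gamma> h"
  using augment_mod_add_mult[of 0 h] \<psi> v by simp

lemma augment_neq_Minf: "augment v \<psi> \<gamma> g \<noteq> Minf"
proof (induction g rule: poly_induct_div[OF \<psi>])
  case 1
  then show ?case
    using v by (simp add: augment_of_degree_less \<psi>)
next
  case (2 g)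
  then have "Fin \<gamma> + augment v \<psi> \<gamma> (g div \<psi>) \<noteq> Minf"
    by (cases "augment v \<psi> \<gamma> (g div \<psi>)") auto
  then show ?case
    using augment_rec[OF v \<psi>, of \<gamma> g] valuation_neq_Minf[OF v] by (simp add: min_def)
qed

lemma augment_eq_Pinf_iff: "augment v \<psi> \<gamma> g = Pinf \<longleftrightarrow> g = 0"
proof (induction g rule: poly_induct_div[OF \<psi>])
  case 1
  then show ?case
    using v by (simp add: augment_of_degree_less \<psi>)
next
  case (2 g)
  have "augment v \<psi> \<gamma> g = Pinf \<longleftrightarrow> g mod \<psi> = 0 \<and> g div \<psi> = 0"
    using augment_rec[OF v \<psi>, of \<gamma> g] 2(2) valuation_eq_Pinf_iff[OF v, of "g mod \<psi>"]
    by (cases "augment v \<psi> \<gamma> (g div \<psi>)") (auto simp: min_def)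
  also have "\<dots> \<longleftrightarrow> g = 0"
    by (metis div_mult_mod_eq div_0 mod_0 mult_zero_left add_0)
  finally show ?case .
qed

lemma augment_0 [simp]: "augment v \<psi> \<gamma> 0 = Pinf"
  using augment_eq_Pinf_iff by simp

lemma augment_uminus: "augment v \<psi> \<gamma> (- g) = augment v \<psi> \<gamma> g"
  by (simp add: augment_def adic_coeff_def valuation_uminus[OF v])

lemma augment_add: "min (augment v \<psi> \<gamma> f) (augment v \<psi> \<gamma> g) \<le> augment v \<psi> \<gamma> (f + g)"
proof -
  let ?T = "adic_term v \<psi> \<gamma>"
  define N where "N = max (degree f) (degree g)"
  have term_le: "min (?T f j) (?T g j) \<le> ?T (f + g) j" for j
  proof -
    have "adic_coeff \<psi> (f + g) j = adic_coeff \<psi> f j + adic_coeff \<psi> g j"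
      by (simp add: adic_coeff_def poly_div_add_left poly_mod_add_left)
    then show ?thesis
      unfolding adic_term_def extended_add_min_distrib(2)[symmetric]
      using valuation_add[OF v, of "adic_coeff \<psi> f j" "adic_coeff \<psi> g j"] by (simp add: add_right_mono)
  qed
  have Min_le_term: "min (Min (?T f ` {0..N})) (Min (?T g ` {0..N})) \<le> min (?T f j) (?T g j)"
    if "j \<le> N" for j
    using that by (intro min.mono Min_le) auto
  have "augment v \<psi> \<gamma> h = Min (?T h ` {0..N})" if "degree h \<le> N" for h
    using that by (rule augment_eq_Min_adic_term[OF v \<psi>])
  moreover have "degree f \<le> N" "degree g \<le> N" "degree (f + g) \<le> N"
    unfolding N_def by (auto intro: degree_add_le_max)
  moreover have "min (Min (?T f ` {0..N})) (Min (?T g ` {0..N})) \<le> Min (?T (f + g) ` {0..N})"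
  proof (rule Min.boundedI)
    fix x
    assume "x \<in> ?T (f + g) ` {0..N}"
    then obtain j where "j \<le> N" "x = ?T (f + g) j"
      by auto
    then show "min (Min (?T f ` {0..N})) (Min (?T g ` {0..N})) \<le> x"
      using Min_le_term term_le order_trans by blast
  qed auto
  ultimately show ?thesis
    by simp
qed

end

section \<open>MacLane's augmentation theorem\<close>

lemma degree_pos_if_key_polynomial:
  assumes v: "valuation v" and key: "key_polynomial v \<psi>"
  shows "degree \<psi> > 0"
proof (rule ccontr)
  assume "\<not> degree \<psi> > 0"
  moreover have "lead_coeff \<psi> = 1"
    using key by (simp add: key_polynomial_def)
  ultimately have "\<psi> = 1"
    by (metis degree_0_id gr0I one_pCons)
  then have "mu_divides v \<psi> 1"
    using v by (intro mu_divides_if_dvd) auto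
  then show False
    using key by (simp add: key_polynomial_def mu_irreducible_def)
qed

lemma valuation_eq_min_mod_div:
  assumes v: "valuation v" and min: "mu_minimal v \<psi>" and \<psi>: "degree \<psi> > 0"
  shows "v g = min (v (g mod \<psi>)) (v (\<psi> * (g div \<psi>)))"
proof (rule antisym)
  have "\<psi> \<noteq> 0"
    using \<psi> by auto
  define b q where "b = g mod \<psi>" and "q = g div \<psi>"
  have g: "g = b + \<psi> * q"
    by (simp add: b_def q_def)
  then have "min (v b) (v (\<psi> * q)) \<le> v g"
    using valuation_add[OF v, of b "\<psi> * q"] by simp
  then show "min (v (g mod \<psi>)) (v (\<psi> * (g div \<psi>))) \<le> v g"
    by (simp add: b_def q_def)
  show "v g \<le> min (v (g mod \<psi>)) (v (\<psi> * (g div \<psi>)))"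
  proof (rule ccontr)
    assume "\<not> ?thesis"
    then have less: "min (v b) (v (\<psi> * q)) < v g"
      by (simp only: not_le b_def q_def)
    have "v b = v (\<psi> * q)"
    proof (rule ccontr)
      assume "v b \<noteq> v (\<psi> * q)"
      then have "v g = min (v b) (v (\<psi> * q))"
        using valuation_add_eq_left[OF v, of b "\<psi> * q"] valuation_add_eq_left[OF v, of "\<psi> * q" b]
        by (cases "v b < v (\<psi> * q)") (auto simp: g add.commute min_def)
      with less show False
        by simp
    qed
    then have "v b < v g"
      using less by simp
    then have "mu_equiv v b (\<psi> * (- q))"
      by (simp add: mu_equiv_def g)
    moreover have "b \<noteq> 0"
      using \<open>v b < v g\<close> v by auto
    ultimately have "degree \<psi> \<le> degree b"
      using min unfolding mu_minimal_def mu_divides_def by blast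
    moreover have "degree b < degree \<psi>"
      using \<open>b \<noteq> 0\<close> \<open>\<psi> \<noteq> 0\<close> degree_mod_less'[of \<psi> g] by (simp add: b_def)
    ultimately show False
      by simp
  qed
qed

locale augmentation =
  fixes \<mu> :: "'k::field poly \<Rightarrow> 'g::linordered_ab_group_add extended" and \<psi> :: "'k poly" and \<gamma> :: 'g
  assumes valuation: "valuation \<mu>" and key: "key_polynomial \<mu> \<psi>" and key_less: "\<mu> \<psi> < Fin \<gamma>"
begin

abbreviation \<mu>' :: "'k poly \<Rightarrow> 'g extended" where
  "\<mu>' \<equiv> augment \<mu> \<psi> \<gamma>"

lemma degree_key_pos: "degree \<psi> > 0"
  using valuation key by (rule degree_pos_if_key_polynomial)

lemma key_minimal: "mu_minimal \<mu> \<psi>"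
  using key by (simp add: key_polynomial_def)

lemma degree_mod_key_less: "degree (g mod \<psi>) < degree \<psi>"
  by (metis degree_0 degree_key_pos degree_mod_less' gr_implies_not0)

lemmas augment_mod_div = augment_rec[OF valuation degree_key_pos, of \<gamma>]
lemmas augment_key_mult = augment_key_mult[OF valuation degree_key_pos, of \<gamma>]
lemmas augment_add = augment_add[OF valuation degree_key_pos, of \<gamma>]
lemmas augment_eq_Pinf_iff = augment_eq_Pinf_iff[OF valuation degree_key_pos, of \<gamma>]
lemmas augment_neq_Minf [simp] = augment_neq_Minf[OF valuation degree_key_pos, of \<gamma>]
lemmas augment_0 [simp] = augment_0[OF valuation degree_key_pos, of \<gamma>]
lemmas induct_div = poly_induct_div[OF degree_key_pos, case_names 0 div]

lemma augment_add_eq_left: "\<mu>' a < \<mu>' b \<Longrightarrow> \<mu>' (a + b) = \<mu>' a"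
  by (rule ultrametric_add_eq_left)
    (auto simp: augment_add augment_uminus[OF valuation degree_key_pos])

lemma valuation_le_augment: "\<mu> g \<le> \<mu>' g"
proof (induction g rule: induct_div)
  case 0
  then show ?case
    by simp
next
  case (div g)
  have "\<mu> (\<psi> * (g div \<psi>)) \<le> Fin \<gamma> + \<mu>' (g div \<psi>)"
    using add_mono[OF less_imp_le[OF key_less] div(2)] valuation_mult[OF valuation] by simp
  then show ?case
    using valuation_eq_min_mod_div[OF valuation key_minimal degree_key_pos, of g] augment_mod_div[of g]
    by (auto simp: min_def)
qed

lemma augment_mult_ge_of_degree_less:
  assumes "degree a < degree \<psi>"
  shows "\<mu> a + \<mu>' g \<le> \<mu>' (a * g)"
proof (induction g rule: induct_div)
  case 0
  then show ?case
    by simp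
next
  case (div g)
  define b q where "b = g mod \<psi>" and "q = g div \<psi>"
  have "g = b + \<psi> * q"
    unfolding b_def q_def by (rule mod_mult_div_eq[symmetric])
  then have "a * g = a * b + \<psi> * (a * q)"
    by (simp add: algebra_simps)
  then have "min (\<mu>' (a * b)) (Fin \<gamma> + \<mu>' (a * q)) \<le> \<mu>' (a * g)"
    using augment_add[of "a * b" "\<psi> * (a * q)"] augment_key_mult by simp
  moreover have "\<mu> a + \<mu> b \<le> \<mu>' (a * b)"
    using valuation_le_augment[of "a * b"] valuation_mult[OF valuation] by simp
  moreover have "\<mu> a + (Fin \<gamma> + \<mu>' q) \<le> Fin \<gamma> + \<mu>' (a * q)"
    using add_left_mono[OF div(2), of "Fin \<gamma>"] by (simp add: q_def ac_simps)
  ultimately have "min (\<mu> a + \<mu> b) (\<mu> a + (Fin \<gamma> + \<mu>' q)) \<le> \<mu>' (a * g)"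
    by (meson min.mono order_trans)
  then show ?case
    by (simp add: augment_mod_div[of g] extended_add_min_distrib b_def q_def)
qed

lemma augment_mult_ge: "\<mu>' f + \<mu>' g \<le> \<mu>' (f * g)"
proof (induction f rule: induct_div)
  case 0
  then show ?case
    by simp
next
  case (div f)
  define a q where "a = f mod \<psi>" and "q = f div \<psi>"
  have "f = a + \<psi> * q"
    unfolding a_def q_def by (rule mod_mult_div_eq[symmetric])
  then have "f * g = a * g + \<psi> * (q * g)"
    by (simp add: algebra_simps)
  then have "min (\<mu>' (a * g)) (Fin \<gamma> + \<mu>' (q * g)) \<le> \<mu>' (f * g)"
    using augment_add[of "a * g" "\<psi> * (q * g)"] augment_key_mult by simp
  moreover have "\<mu> a + \<mu>' g \<le> \<mu>' (a * g)"
    unfolding a_def by (rule augment_mult_ge_of_degree_less[OF degree_mod_key_less])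
  moreover have "(Fin \<gamma> + \<mu>' q) + \<mu>' g \<le> Fin \<gamma> + \<mu>' (q * g)"
    using add_left_mono[OF div(2), of "Fin \<gamma>"] by (simp add: q_def ac_simps)
  ultimately have "min (\<mu> a + \<mu>' g) ((Fin \<gamma> + \<mu>' q) + \<mu>' g) \<le> \<mu>' (f * g)"
    by (meson min.mono order_trans)
  then show ?case
    by (simp add: augment_mod_div[of f] extended_add_min_distrib a_def q_def)
qed

lemma valuation_mod_mult_le:
  assumes "degree a < degree \<psi>" "degree b < degree \<psi>"
  shows "\<mu> ((a * b) mod \<psi>) \<le> \<mu> (a * b)"
proof (rule ccontr)
  assume less: "\<not> ?thesis"
  then have "mu_equiv \<mu> (a * b) (\<psi> * ((a * b) div \<psi>))"
    by (simp add: mu_equiv_def minus_mult_div_eq_mod)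
  then have "mu_divides \<mu> \<psi> a \<or> mu_divides \<mu> \<psi> b"
    using key unfolding key_polynomial_def mu_irreducible_def mu_divides_def by blast
  moreover have "a \<noteq> 0" "b \<noteq> 0"
    using less by auto
  ultimately show False
    using key_minimal assms by (auto simp: mu_minimal_def)
qed

lemma augment_mult_le_of_div:
  assumes g: "g \<noteq> 0"
    and div_less: "Fin \<gamma> + \<mu>' (f div \<psi>) < \<mu> (f mod \<psi>)"
    and IH: "\<mu>' ((f div \<psi>) * g) \<le> \<mu>' (f div \<psi>) + \<mu>' g"
  shows "\<mu>' (f * g) \<le> \<mu>' f + \<mu>' g"
proof -
  define a q where "a = f mod \<psi>" and "q = f div \<psi>"
  have f_eq: "f = a + \<psi> * q"
    unfolding a_def q_def by (rule mod_mult_div_eq[symmetric])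
  have f: "\<mu>' f = Fin \<gamma> + \<mu>' q"
    using augment_mod_div[of f] div_less by (simp add: q_def)
  obtain x where x: "\<mu>' g = Fin x"
    using g augment_neq_Minf augment_eq_Pinf_iff by (cases "\<mu>' g") auto
  have le: "\<mu>' (\<psi> * (q * g)) \<le> \<mu>' f + \<mu>' g"
    using add_left_mono[OF IH, of "Fin \<gamma>"] by (simp add: augment_key_mult f q_def ac_simps)
  also have "\<dots> < \<mu> a + \<mu>' g"
    using div_less by (simp add: f x a_def q_def)
  also have "\<dots> \<le> \<mu>' (a * g)"
    unfolding a_def by (rule augment_mult_ge_of_degree_less[OF degree_mod_key_less])
  finally have "\<mu>' (\<psi> * (q * g) + a * g) = \<mu>' (\<psi> * (q * g))"
    by (rule augment_add_eq_left)
  moreover have "\<psi> * (q * g) + a * g = f * g"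
    using f_eq by (simp add: algebra_simps)
  ultimately show ?thesis
    using le by simp
qed

lemma augment_mult_le: "\<mu>' (f * g) \<le> \<mu>' f + \<mu>' g"
proof (induction "degree f + degree g" arbitrary: f g rule: less_induct)
  case less
  have div_less: "degree (h div \<psi>) < degree h" if "h div \<psi> \<noteq> 0" for h
    using that degree_key_pos degree_div_less[of h \<psi>] div_poly_less[of h \<psi>] by fastforce
  \<comment> \<open>Either one minimum is attained only beyond the constant term, so that a factor \<open>\<psi>\<close> can be
    split off, or both values are those of the remainders mod \<open>\<psi>\<close>.\<close>
  consider "f = 0 \<or> g = 0"
    | "f \<noteq> 0" "g \<noteq> 0" "Fin \<gamma> + \<mu>' (f div \<psi>) < \<mu> (f mod \<psi>)"
    | "f \<noteq> 0" "g \<noteq> 0" "Fin \<gamma> + \<mu>' (g div \<psi>) < \<mu> (g mod \<psi>)"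
    | "\<mu>' f = \<mu> (f mod \<psi>)" "\<mu>' g = \<mu> (g mod \<psi>)"
    using augment_mod_div[of f] augment_mod_div[of g] by (fastforce simp: min_def not_less)
  then show ?case
  proof cases
    case 1
    then show ?thesis
      using augment_neq_Minf by auto
  next
    case 2
    then have "f div \<psi> \<noteq> 0"
      using valuation by auto
    then show ?thesis
      using 2 less div_less augment_mult_le_of_div by simp
  next
    case 3
    then have "g div \<psi> \<noteq> 0"
      using valuation by auto
    then show ?thesis
      using 3 less[of "g div \<psi>" f] div_less augment_mult_le_of_div[of f g]
      by (simp add: ac_simps)
  next
    case 4
    have "\<mu>' (f * g) \<le> \<mu> ((f * g) mod \<psi>)"
      using augment_mod_div[of "f * g"] by simp
    also have "(f * g) mod \<psi> = ((f mod \<psi>) * (g mod \<psi>)) mod \<psi>"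
      by (simp add: mod_mult_eq)
    also have "\<mu> \<dots> \<le> \<mu> ((f mod \<psi>) * (g mod \<psi>))"
      by (intro valuation_mod_mult_le degree_mod_key_less)
    also have "\<dots> = \<mu>' f + \<mu>' g"
      using 4 valuation_mult[OF valuation] by simp
    finally show ?thesis .
  qed
qed

lemma valuation_augment: "valuation \<mu>'"
  unfolding valuation_def
proof (intro conjI allI)
  show "\<mu>' (f * g) = \<mu>' f + \<mu>' g" for f g
    using augment_mult_le augment_mult_ge by (rule antisym)
qed (simp_all add: augment_eq_Pinf_iff augment_add)

lemma mu_divides_key_iff: "mu_divides \<mu> \<psi> g \<longleftrightarrow> \<mu> g < \<mu> (g mod \<psi>)"
proof
  assume "mu_divides \<mu> \<psi> g"
  then obtain h where less: "\<mu> g < \<mu> (g - \<psi> * h)"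
    unfolding mu_divides_def mu_equiv_def by blast
  have "(g - \<psi> * h) mod \<psi> = g mod \<psi>"
    by (simp add: poly_mod_diff_left)
  then have "\<mu> (g - \<psi> * h) \<le> \<mu> (g mod \<psi>)"
    using valuation_eq_min_mod_div[OF valuation key_minimal degree_key_pos, of "g - \<psi> * h"] by simp
  with less show "\<mu> g < \<mu> (g mod \<psi>)"
    by simp
next
  assume "\<mu> g < \<mu> (g mod \<psi>)"
  then have "mu_equiv \<mu> g (\<psi> * (g div \<psi>))"
    by (simp add: mu_equiv_def minus_mult_div_eq_mod)
  then show "mu_divides \<mu> \<psi> g"
    unfolding mu_divides_def by blast
qed

lemma less_augment_iff_mu_divides:
  assumes "g \<noteq> 0"
  shows "\<mu> g < \<mu>' g \<longleftrightarrow> mu_divides \<mu> \<psi> g"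
proof
  assume "\<mu> g < \<mu>' g"
  also have "\<mu>' g \<le> \<mu> (g mod \<psi>)"
    using augment_mod_div[of g] by simp
  finally show "mu_divides \<mu> \<psi> g"
    using mu_divides_key_iff by blast
next
  assume "mu_divides \<mu> \<psi> g"
  then have mod_less: "\<mu> g < \<mu> (g mod \<psi>)"
    using mu_divides_key_iff by blast
  define q where "q = g div \<psi>"
  have g_eq: "\<mu> g = \<mu> (\<psi> * q)"
    using valuation_eq_min_mod_div[OF valuation key_minimal degree_key_pos, of g] mod_less
    unfolding q_def by (metis min.strict_order_iff min_def)
  then have "q \<noteq> 0"
    using assms valuation_eq_Pinf_iff[OF valuation, of g] valuation_0[OF valuation] by auto
  then obtain y where y: "\<mu> q = Fin y"
    using valuation_FinE[OF valuation] by blast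
  have "\<mu> g = \<mu> \<psi> + \<mu> q"
    using g_eq valuation_mult[OF valuation] by simp
  also have "\<dots> < Fin \<gamma> + \<mu> q"
    using key_less by (simp only: y Fin_add_less_iff)
  also have "\<dots> \<le> Fin \<gamma> + \<mu>' q"
    by (simp add: add_left_mono valuation_le_augment)
  finally show "\<mu> g < \<mu>' g"
    using mod_less augment_mod_div[of g] by (simp add: q_def)
qed

end

section \<open>Continuous admissible families\<close>

lemma degree_diff_less_if_monic:
  fixes p q :: "'k::field poly"
  assumes "degree p = degree q" "lead_coeff p = 1" "lead_coeff q = 1" "degree p > 0"
  shows "degree (q - p) < degree p"
proof (cases "q = p")
  case False
  have "degree (q - p) \<le> degree p"
    using degree_diff_le_max[of q p] assms(1) by simp
  moreover have "coeff (q - p) (degree p) = 0"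
    using assms by simp
  ultimately show ?thesis
    using False by (simp add: degree_less_if_less_eqI)
qed (use assms in simp)

lemma mu_divides_transfer:
  assumes v: "valuation v" and "v \<psi>\<^sub>1 = Fin t" "v \<psi>\<^sub>2 = Fin t" "Fin t < v (\<psi>\<^sub>1 - \<psi>\<^sub>2)"
    and "g \<noteq> 0" and "mu_divides v \<psi>\<^sub>1 g"
  shows "mu_divides v \<psi>\<^sub>2 g"
proof -
  obtain h where h: "mu_equiv v g (\<psi>\<^sub>1 * h)"
    using assms(6) unfolding mu_divides_def by blast
  then have "v (\<psi>\<^sub>1 * h) = v g"
    by (rule valuation_eq_if_mu_equiv[OF v])
  then have "h \<noteq> 0"
    using assms(5) valuation_eq_Pinf_iff[OF v, of g] valuation_0[OF v] by (metis mult_zero_right)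
  then obtain y where y: "v h = Fin y"
    using valuation_FinE[OF v] by blast
  have g: "v g = Fin t + v h"
    using \<open>v (\<psi>\<^sub>1 * h) = v g\<close> valuation_mult[OF v] assms(2) by simp
  have "v g < v ((\<psi>\<^sub>1 - \<psi>\<^sub>2) * h)"
    using assms(4) by (simp only: g y valuation_mult[OF v] Fin_add_less_iff)
  moreover have "v g < v (g - \<psi>\<^sub>1 * h)"
    using h by (simp only: mu_equiv_def)
  ultimately have "v g < min (v (g - \<psi>\<^sub>1 * h)) (v ((\<psi>\<^sub>1 - \<psi>\<^sub>2) * h))"
    by simp
  also have "\<dots> \<le> v ((g - \<psi>\<^sub>1 * h) + (\<psi>\<^sub>1 - \<psi>\<^sub>2) * h)"
    by (rule valuation_add[OF v])
  also have "(g - \<psi>\<^sub>1 * h) + (\<psi>\<^sub>1 - \<psi>\<^sub>2) * h = g - \<psi>\<^sub>2 * h"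
    by (simp add: algebra_simps)
  finally show ?thesis
    unfolding mu_divides_def mu_equiv_def by blast
qed

lemma mu_A_eqI:
  assumes "\<And>\<beta>. \<mu>s \<beta> g \<le> \<mu>s \<alpha> g"
  shows "mu_A \<mu>s g = \<mu>s \<alpha> g"
  unfolding mu_A_def
proof (rule the_equality)
  show "(\<forall>\<beta>. \<mu>s \<beta> g \<le> \<mu>s \<alpha> g) \<and> (\<forall>u. (\<forall>\<beta>. \<mu>s \<beta> g \<le> u) \<longrightarrow> \<mu>s \<alpha> g \<le> u)"
    using assms by blast
  fix s
  assume s: "(\<forall>\<beta>. \<mu>s \<beta> g \<le> s) \<and> (\<forall>u. (\<forall>\<beta>. \<mu>s \<beta> g \<le> u) \<longrightarrow> s \<le> u)"
  then have "s \<le> \<mu>s \<alpha> g"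
    using assms by blast
  moreover have "\<mu>s \<alpha> g \<le> s"
    using s by blast
  ultimately show "s = \<mu>s \<alpha> g"
    by (rule antisym)
qed

locale continuous_admissible_family =
  fixes \<nu> :: "'k::field \<Rightarrow> 'g::linordered_ab_group_add extended"
    and \<mu> :: "'k poly \<Rightarrow> 'g extended"
    and \<phi>s :: "'a::linorder \<Rightarrow> 'k poly" and \<gamma>s :: "'a \<Rightarrow> 'g"
  assumes family: "continuous_family \<nu> \<mu> \<phi>s \<gamma>s"
begin

abbreviation \<mu>s :: "'a \<Rightarrow> 'k poly \<Rightarrow> 'g extended" where
  "\<mu>s \<alpha> \<equiv> augment \<mu> (\<phi>s \<alpha>) (\<gamma>s \<alpha>)"

lemma no_max: "\<exists>\<beta>. (\<alpha>::'a) < \<beta>"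
  using family unfolding continuous_family_def by blast

lemma augmentation: "augmentation \<mu> (\<phi>s \<alpha>) (\<gamma>s \<alpha>)"
proof
  show key: "key_polynomial \<mu> (\<phi>s \<alpha>)" and "\<mu> (\<phi>s \<alpha>) < Fin (\<gamma>s \<alpha>)"
    using family by (simp_all add: continuous_family_def)
  show "valuation \<mu>"
    using family key by (auto simp: continuous_family_def intro: valuation_if_key_polynomial)
qed

lemma augmentation_step:
  assumes "\<alpha> < \<beta>"
  shows "augmentation (\<mu>s \<alpha>) (\<phi>s \<beta>) (\<gamma>s \<beta>)" and "\<mu>s \<alpha> (\<phi>s \<beta>) = Fin (\<gamma>s \<alpha>)"
    and "\<mu>s \<beta> = augment (\<mu>s \<alpha>) (\<phi>s \<beta>) (\<gamma>s \<beta>)"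
proof -
  show phi_value: "\<mu>s \<alpha> (\<phi>s \<beta>) = Fin (\<gamma>s \<alpha>)" and "\<mu>s \<beta> = augment (\<mu>s \<alpha>) (\<phi>s \<beta>) (\<gamma>s \<beta>)"
    using family assms by (simp_all add: continuous_family_def)
  show "augmentation (\<mu>s \<alpha>) (\<phi>s \<beta>) (\<gamma>s \<beta>)"
  proof
    show "valuation (\<mu>s \<alpha>)"
      using augmentation by (rule augmentation.valuation_augment)
    show "key_polynomial (\<mu>s \<alpha>) (\<phi>s \<beta>)"
      using family assms by (simp add: continuous_family_def)
    have "\<gamma>s \<alpha> < \<gamma>s \<beta>"
      using family assms by (simp add: continuous_family_def strict_mono_def)
    then show "\<mu>s \<alpha> (\<phi>s \<beta>) < Fin (\<gamma>s \<beta>)"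
      by (simp add: phi_value)
  qed
qed

lemma valuation_mu: "valuation (\<mu>s \<alpha>)"
  using augmentation by (rule augmentation.valuation_augment)

lemma degree_key_pos: "degree (\<phi>s \<alpha>) > 0"
  using augmentation by (rule augmentation.degree_key_pos)

lemma mu_mono:
  assumes "\<alpha> \<le> \<beta>"
  shows "\<mu>s \<alpha> g \<le> \<mu>s \<beta> g"
proof (cases "\<alpha> = \<beta>")
  case False
  then have "\<alpha> < \<beta>"
    using assms by simp
  have "\<mu>s \<alpha> g \<le> augment (\<mu>s \<alpha>) (\<phi>s \<beta>) (\<gamma>s \<beta>) g"
    using augmentation_step(1)[OF \<open>\<alpha> < \<beta>\<close>] by (rule augmentation.valuation_le_augment)
  then show ?thesis
    by (simp only: augmentation_step(3)[OF \<open>\<alpha> < \<beta>\<close>])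
qed simp

lemma mu_of_degree_less: "degree a < degree (\<phi>s \<alpha>) \<Longrightarrow> \<mu>s \<alpha> a = \<mu> a"
  by (rule augment_of_degree_less[OF augmentation.valuation[OF augmentation] degree_key_pos])

lemma key_diff_value:
  assumes "\<alpha> < \<beta>" "\<beta> < \<delta>"
  shows "Fin (\<gamma>s \<alpha>) < \<mu>s \<alpha> (\<phi>s \<delta> - \<phi>s \<beta>)"
proof -
  define e where "e = \<phi>s \<delta> - \<phi>s \<beta>"
  have same_degree: "degree (\<phi>s \<alpha>) = degree (\<phi>s \<beta>)" "degree (\<phi>s \<beta>) = degree (\<phi>s \<delta>)"
    using family by (simp_all add: continuous_family_def)
  have monic: "lead_coeff (\<phi>s \<alpha>) = 1" for \<alpha>
    using augmentation.key[OF augmentation] by (simp add: key_polynomial_def)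
  have deg_e: "degree e < degree (\<phi>s \<beta>)"
    unfolding e_def using same_degree(2) degree_key_pos[of \<beta>]
    by (intro degree_diff_less_if_monic monic) auto
  have "\<mu>s \<beta> 1 = 0"
    using degree_key_pos[of \<beta>] mu_of_degree_less[of 1 \<beta>] valuation_1[OF augmentation.valuation[OF augmentation]]
    by simp
  moreover have "\<mu>s \<beta> (e + \<phi>s \<beta> * 1) = min (\<mu> e) (Fin (\<gamma>s \<beta>) + \<mu>s \<beta> 1)"
    by (rule augment_mod_add_mult[OF augmentation.valuation[OF augmentation] degree_key_pos deg_e])
  moreover have "e + \<phi>s \<beta> * 1 = \<phi>s \<delta>"
    by (simp add: e_def)
  ultimately have "\<mu>s \<beta> (\<phi>s \<delta>) = min (\<mu> e) (Fin (\<gamma>s \<beta>))"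
    by simp
  then have "Fin (\<gamma>s \<beta>) \<le> \<mu> e"
    using augmentation_step(2)[OF assms(2)] by (simp add: min_def split: if_splits)
  moreover have "\<gamma>s \<alpha> < \<gamma>s \<beta>"
    using family assms(1) by (simp add: continuous_family_def strict_mono_def)
  moreover have "\<mu>s \<alpha> e = \<mu> e"
    using deg_e same_degree(1) by (simp add: mu_of_degree_less)
  ultimately have "Fin (\<gamma>s \<alpha>) < \<mu>s \<alpha> e"
    using order_less_le_trans[of "Fin (\<gamma>s \<alpha>)" "Fin (\<gamma>s \<beta>)"] by simp
  then show ?thesis
    by (simp add: e_def)
qed

lemma mu_less_iff_mu_divides:
  assumes "\<alpha> < \<beta>" "g \<noteq> 0"
  shows "\<mu>s \<alpha> g < \<mu>s \<beta> g \<longleftrightarrow> mu_divides (\<mu>s \<alpha>) (\<phi>s \<beta>) g"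
  using augmentation.less_augment_iff_mu_divides[OF augmentation_step(1)[OF assms(1)] assms(2)]
  by (simp only: augmentation_step(3)[OF assms(1)])

text \<open>The key polynomials \<open>\<phi>\<^sub>\<beta>\<close> and \<open>\<phi>\<^sub>\<delta>\<close> are \<open>\<mu>\<^sub>\<alpha>\<close>-equivalent (\<open>key_diff_value\<close>), so they
  \<open>\<mu>\<^sub>\<alpha>\<close>-divide the same polynomials.\<close>

lemma mu_stable:
  assumes "\<alpha> < \<beta>" "g \<noteq> 0" "\<mu>s \<alpha> g = \<mu>s \<beta> g" "\<beta> \<le> \<delta>"
  shows "\<mu>s \<delta> g = \<mu>s \<alpha> g"
proof (cases "\<beta> = \<delta>")
  case False
  then have "\<beta> < \<delta>" "\<alpha> < \<delta>"
    using assms(1,4) by auto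
  have "\<not> \<mu>s \<alpha> g < \<mu>s \<delta> g"
  proof
    assume "\<mu>s \<alpha> g < \<mu>s \<delta> g"
    then have "mu_divides (\<mu>s \<alpha>) (\<phi>s \<delta>) g"
      using mu_less_iff_mu_divides[OF \<open>\<alpha> < \<delta>\<close> assms(2)] by simp
    then have "mu_divides (\<mu>s \<alpha>) (\<phi>s \<beta>) g"
      using mu_divides_transfer[OF valuation_mu augmentation_step(2)[OF \<open>\<alpha> < \<delta>\<close>]
          augmentation_step(2)[OF assms(1)] key_diff_value[OF assms(1) \<open>\<beta> < \<delta>\<close>] assms(2)]
      by blast
    then show False
      using mu_less_iff_mu_divides[OF assms(1,2)] assms(3) by simp
  qed
  then show ?thesis
    using mu_mono[of \<alpha> \<delta> g] \<open>\<alpha> < \<delta>\<close> by simp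
qed (use assms(3) in simp)

lemma mu_A_eq_eventually:
  assumes "\<And>\<delta>. \<alpha>\<^sub>0 \<le> \<delta> \<Longrightarrow> \<mu>s \<delta> g = c"
  shows "mu_A \<mu>s g = c"
proof -
  have "\<mu>s \<delta> g \<le> \<mu>s \<alpha>\<^sub>0 g" for \<delta>
  proof (cases "\<delta> \<le> \<alpha>\<^sub>0")
    case True
    then show ?thesis
      by (rule mu_mono)
  next
    case False
    then show ?thesis
      using assms[of \<delta>] assms[of \<alpha>\<^sub>0] by simp
  qed
  then have "mu_A \<mu>s g = \<mu>s \<alpha>\<^sub>0 g"
    by (rule mu_A_eqI)
  then show ?thesis
    using assms[of \<alpha>\<^sub>0] by simp
qed

lemma eventually_mu_eq_mu_A:
  assumes "g \<notin> PhiC \<mu>s"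
  obtains \<alpha>\<^sub>0 where "\<And>\<delta>. \<alpha>\<^sub>0 \<le> \<delta> \<Longrightarrow> \<mu>s \<delta> g = mu_A \<mu>s g"
proof -
  obtain \<alpha> \<beta> where "\<alpha> < \<beta>" "\<not> \<mu>s \<alpha> g < \<mu>s \<beta> g"
    using assms unfolding PhiC_def by auto
  then have eq: "\<mu>s \<alpha> g = \<mu>s \<beta> g"
    using mu_mono[of \<alpha> \<beta> g] by simp
  have stable: "\<mu>s \<delta> g = \<mu>s \<beta> g" if "\<beta> \<le> \<delta>" for \<delta>
  proof (cases "g = 0")
    case False
    then show ?thesis
      using mu_stable[OF \<open>\<alpha> < \<beta>\<close> False eq that] eq by simp
  qed (simp add: valuation_0[OF valuation_mu])
  then have "mu_A \<mu>s g = \<mu>s \<beta> g"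
    by (rule mu_A_eq_eventually)
  then have "\<mu>s \<delta> g = mu_A \<mu>s g" if "\<beta> \<le> \<delta>" for \<delta>
    using stable[OF that] by simp
  then show ?thesis
    by (rule that)
qed

lemma mu_A_add_eq_left:
  assumes "a \<notin> PhiC \<mu>s" "mu_A \<mu>s a < \<mu>s \<alpha>\<^sub>1 b"
  shows "mu_A \<mu>s (a + b) = mu_A \<mu>s a"
proof -
  obtain \<alpha>\<^sub>0 where a: "\<And>\<delta>. \<alpha>\<^sub>0 \<le> \<delta> \<Longrightarrow> \<mu>s \<delta> a = mu_A \<mu>s a"
    using eventually_mu_eq_mu_A[OF assms(1)] by blast
  have "\<mu>s \<delta> (a + b) = mu_A \<mu>s a" if "max \<alpha>\<^sub>0 \<alpha>\<^sub>1 \<le> \<delta>" for \<delta>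
  proof -
    have "\<mu>s \<delta> a < \<mu>s \<delta> b"
      using a[of \<delta>] assms(2) mu_mono[of \<alpha>\<^sub>1 \<delta> b] that by simp
    then have "\<mu>s \<delta> (a + b) = \<mu>s \<delta> a"
      by (rule valuation_add_eq_left[OF valuation_mu])
    then show ?thesis
      using a[of \<delta>] that by simp
  qed
  then show ?thesis
    by (rule mu_A_eq_eventually)
qed

lemma mult_mem_PhiC:
  assumes "\<phi> \<in> PhiC \<mu>s" "q \<noteq> 0"
  shows "q * \<phi> \<in> PhiC \<mu>s"
  unfolding PhiC_def
proof (intro CollectI allI impI)
  fix \<alpha> \<beta> :: 'a
  assume "\<alpha> < \<beta>"
  obtain x where x: "\<mu>s \<alpha> q = Fin x"
    using valuation_FinE[OF valuation_mu assms(2)] by blast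
  have "\<mu>s \<alpha> (q * \<phi>) = Fin x + \<mu>s \<alpha> \<phi>"
    using valuation_mult[OF valuation_mu] x by simp
  also have "\<dots> < Fin x + \<mu>s \<beta> \<phi>"
    using assms(1) \<open>\<alpha> < \<beta>\<close> unfolding PhiC_def by (simp only: Fin_add_less_iff) blast
  also have "\<dots> \<le> \<mu>s \<beta> q + \<mu>s \<beta> \<phi>"
    using mu_mono[of \<alpha> \<beta> q] \<open>\<alpha> < \<beta>\<close> x by (simp add: add_right_mono)
  also have "\<dots> = \<mu>s \<beta> (q * \<phi>)"
    using valuation_mult[OF valuation_mu] by simp
  finally show "\<mu>s \<alpha> (q * \<phi>) < \<mu>s \<beta> (q * \<phi>)" .
qed

lemma notin_PhiC_if_degree_less:
  assumes "limit_key_polynomial \<mu>s \<phi>" "g \<noteq> 0" "degree g < degree \<phi>"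
  shows "g \<notin> PhiC \<mu>s"
proof
  assume "g \<in> PhiC \<mu>s"
  then have "[:inverse (lead_coeff g):] * g \<in> PhiC \<mu>s"
    using assms(2) by (intro mult_mem_PhiC) auto
  moreover have "lead_coeff ([:inverse (lead_coeff g):] * g) = 1"
    using assms(2) by simp
  ultimately have "degree \<phi> \<le> degree ([:inverse (lead_coeff g):] * g)"
    using assms(1) unfolding limit_key_polynomial_def by blast
  with assms(2,3) show False
    by simp
qed

lemma A_divides_if_mult_dominated:
  assumes "\<phi> \<in> PhiC \<mu>s" "q \<noteq> 0" and r: "\<And>\<delta>. \<alpha>\<^sub>0 \<le> \<delta> \<Longrightarrow> \<mu>s \<delta> r = c"
    and dominated: "\<And>\<alpha>. \<mu>s \<alpha> (q * \<phi>) \<le> c"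
  shows "A_divides \<mu>s \<phi> (\<phi> * q + r)"
  unfolding A_divides_def
proof (intro exI allI impI)
  fix \<beta>
  assume "\<alpha>\<^sub>0 \<le> \<beta>"
  obtain \<beta>' where "\<beta> < \<beta>'"
    using no_max by blast
  then have "\<mu>s \<beta> (q * \<phi>) < \<mu>s \<beta>' (q * \<phi>)"
    using mult_mem_PhiC[OF assms(1,2)] unfolding PhiC_def by blast
  also have "\<dots> \<le> \<mu>s \<beta> r"
    using dominated r[OF \<open>\<alpha>\<^sub>0 \<le> \<beta>\<close>] by simp
  finally show "mu_divides (\<mu>s \<beta>) \<phi> (\<phi> * q + r)"
    by (intro mu_divides_add_if_less[OF valuation_mu]) (simp add: mult.commute)
qed

lemma mod_nonzero_if_not_A_divides:
  assumes "f \<noteq> 0" "\<not> A_divides \<mu>s \<phi> f"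
  shows "f mod \<phi> \<noteq> 0"
proof
  assume "f mod \<phi> = 0"
  then have "mu_divides (\<mu>s \<beta>) \<phi> f" for \<beta>
    using assms(1) by (intro mu_divides_if_dvd[OF valuation_mu]) (simp_all add: mod_eq_0_iff_dvd)
  then show False
    using assms(2) unfolding A_divides_def by blast
qed

lemma exists_mu_A_mod_less_mult:
  assumes limit: "limit_key_polynomial \<mu>s \<phi>" and "\<not> A_divides \<mu>s \<phi> f"
    and r: "f mod \<phi> \<noteq> 0" "f mod \<phi> \<notin> PhiC \<mu>s"
  shows "\<exists>\<alpha>\<^sub>1. mu_A \<mu>s (f mod \<phi>) < \<mu>s \<alpha>\<^sub>1 (f div \<phi> * \<phi>)"
proof (rule ccontr)
  assume "\<not> ?thesis"
  then have dominated: "\<mu>s \<alpha> (f div \<phi> * \<phi>) \<le> mu_A \<mu>s (f mod \<phi>)" for \<alpha>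
    by (simp add: not_less)
  obtain \<alpha>\<^sub>0 where stable: "\<And>\<delta>. \<alpha>\<^sub>0 \<le> \<delta> \<Longrightarrow> \<mu>s \<delta> (f mod \<phi>) = mu_A \<mu>s (f mod \<phi>)"
    using eventually_mu_eq_mu_A[OF r(2)] by blast
  have "\<mu>s \<alpha>\<^sub>0 (f div \<phi> * \<phi>) < Pinf"
    using dominated[of \<alpha>\<^sub>0] stable[of \<alpha>\<^sub>0] valuation_less_Pinf[OF valuation_mu r(1), of \<alpha>\<^sub>0]
    by (simp add: order_le_less_trans)
  then have "f div \<phi> \<noteq> 0"
    by (auto simp: valuation_0[OF valuation_mu])
  moreover have "\<phi> \<in> PhiC \<mu>s"
    using limit by (simp add: limit_key_polynomial_def)
  ultimately have "A_divides \<mu>s \<phi> (\<phi> * (f div \<phi>) + f mod \<phi>)"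
    using A_divides_if_mult_dominated stable dominated by blast
  with assms(2) show False
    by simp
qed

end

theorem mainTheorem2:
  fixes \<nu> :: "'k::field \<Rightarrow> 'g::linordered_ab_group_add extended"
    and \<mu> :: "'k poly \<Rightarrow> 'g extended"
    and \<phi>s :: "'a::linorder \<Rightarrow> 'k poly" and \<gamma>s :: "'a \<Rightarrow> 'g"
    and \<phi> f :: "'k poly"
  assumes "field_valuation \<nu>"
    and "continuous_family \<nu> \<mu> \<phi>s \<gamma>s"
    and "limit_key_polynomial (\<lambda>\<alpha>. augment \<mu> (\<phi>s \<alpha>) (\<gamma>s \<alpha>)) \<phi>"
    and "f \<noteq> 0"
    and "\<not> A_divides (\<lambda>\<alpha>. augment \<mu> (\<phi>s \<alpha>) (\<gamma>s \<alpha>)) \<phi> f"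
  shows "mu_A (\<lambda>\<alpha>. augment \<mu> (\<phi>s \<alpha>) (\<gamma>s \<alpha>)) (f mod \<phi>)
           = mu_A (\<lambda>\<alpha>. augment \<mu> (\<phi>s \<alpha>) (\<gamma>s \<alpha>)) f
       \<and> (\<exists>\<alpha>0. \<forall>\<alpha>. \<alpha>0 \<le> \<alpha> \<longrightarrow>
            mu_A (\<lambda>\<alpha>. augment \<mu> (\<phi>s \<alpha>) (\<gamma>s \<alpha>)) f < augment \<mu> (\<phi>s \<alpha>) (\<gamma>s \<alpha>) ((f div \<phi>) * \<phi>))"
proof -
  interpret continuous_admissible_family \<nu> \<mu> \<phi>s \<gamma>s
    using assms(2) by unfold_locales
  have "\<phi> \<noteq> 0"
    using assms(3) by (auto simp: limit_key_polynomial_def)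
  have mod_nonzero: "f mod \<phi> \<noteq> 0"
    using assms(4,5) by (rule mod_nonzero_if_not_A_divides)
  then have "f mod \<phi> \<notin> PhiC \<mu>s"
    using assms(3) degree_mod_less'[OF \<open>\<phi> \<noteq> 0\<close>] by (intro notin_PhiC_if_degree_less)
  then obtain \<alpha>\<^sub>1 where less: "mu_A \<mu>s (f mod \<phi>) < \<mu>s \<alpha>\<^sub>1 (f div \<phi> * \<phi>)"
    using exists_mu_A_mod_less_mult[OF assms(3,5) mod_nonzero] by blast
  have "mu_A \<mu>s (f mod \<phi> + f div \<phi> * \<phi>) = mu_A \<mu>s (f mod \<phi>)"
    using \<open>f mod \<phi> \<notin> PhiC \<mu>s\<close> less by (rule mu_A_add_eq_left)
  then have mu_A_f: "mu_A \<mu>s f = mu_A \<mu>s (f mod \<phi>)"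
    by (simp add: add.commute)
  have "mu_A \<mu>s f < \<mu>s \<alpha> (f div \<phi> * \<phi>)" if "\<alpha>\<^sub>1 \<le> \<alpha>" for \<alpha>
    using less mu_mono[OF that, of "f div \<phi> * \<phi>"] mu_A_f by simp
  with mu_A_f show ?thesis
    by auto
qed

end
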